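(* The family $\Sigma_n$ is $\left(\frac n4,\frac n4\right)$-spread.
   Context: $\Sigma_n$ is the set of permutations of $[n]$, each identified with its graph $\{(i,\sigma(i)):i\in[n]\}$, so $\Sigma_n\subset{[n]^2\choose n}$. For a family $\mathcal{F}$ of subsets of $[n]^2$ and $X\subset[n]^2$, $\mathcal{F}(X):=\{F\setminus X: X\subset F\in\mathcal{F}\}$. $\mathcal{F}$ is $r$-spread if $|\mathcal{F}(X)|\le r^{-|X|}|\mathcal{F}|$ for all $X\subset[n]^2$, and $(r,q)$-spread if $\mathcal{F}(A)$ is $r$-spread for every $A\subset[n]^2$ with $|A|\le q$. *)

theory Defs
  imports Complex_Main
begin

definition grid :: "nat \<Rightarrow> (nat \<times> nat) set" where
  "grid n = {1..n} \<times> {1..n}"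

definition perm_graphs :: "nat \<Rightarrow> (nat \<times> nat) set set" where
  "perm_graphs n = {{(i, s i) | i. i \<in> {1..n}} | s. bij_betw s {1..n} {1..n}}"

definition link :: "'a set set \<Rightarrow> 'a set \<Rightarrow> 'a set set" where
  "link F X = {A - X | A. A \<in> F \<and> X \<subseteq> A}"

definition spread :: "'a set \<Rightarrow> real \<Rightarrow> 'a set set \<Rightarrow> bool" where
  "spread V r F \<longleftrightarrow>
     (\<forall>X. X \<subseteq> V \<longrightarrow> real (card (link F X)) \<le> inverse r ^ card X * real (card F))"

definition spread2 :: "'a set \<Rightarrow> real \<Rightarrow> real \<Rightarrow> 'a set set \<Rightarrow> bool" where
  "spread2 V r q F \<longleftrightarrow>
     (\<forall>A. A \<subseteq> V \<and> real (card A) \<le> q \<longrightarrow> spread V r (link F A))"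

end

theory Submission
  imports Defs "HOL-Combinatorics.Permutations"
begin

(* A permutation graph can only contain a set B of cells if B is a partial matching, and then,
   composing with one fixed permutation that extends B, the permutations through B correspond
   to the permutations of the unmatched rows: there are (n - |B|)! of them. As the link of a
   link is again a link, the spread condition reduces to (n/4)^x (m - x)! <= m! for
   m = n - |A| >= 3n/4 and x <= m. This holds factor by factor when m - x >= n/4, and otherwise
   because (m - x)! <= (n/4)^(m - x) and (n/4)^m <= (m/e)^m <= m!. *)

lemma power_div_fact_le_exp:
  fixes x :: real
  assumes "x \<ge> 0"
  shows "x ^ n / fact n \<le> exp x"
proof -
  have "x ^ n / fact n = (\<Sum>k\<in>{n}. x ^ k /\<^sub>R fact k)"
    by (simp add: divide_inverse_commute)
  also have "\<dots> \<le> (\<Sum>k. x ^ k /\<^sub>R fact k)"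
    using assms by (intro sum_le_suminf summable_exp_generic) auto
  also have "\<dots> = exp x"
    by (simp add: exp_def)
  finally show ?thesis .
qed

lemma power_div_exp_le_fact: "(real m / exp 1) ^ m \<le> fact m"
proof -
  have "real m ^ m / fact m \<le> exp 1 ^ m"
    using power_div_fact_le_exp[of "real m" m] by (simp flip: exp_of_nat_mult)
  then show ?thesis
    by (simp add: field_simps)
qed

lemma power_mult_fact_le_fact_add:
  fixes c :: real
  assumes "0 \<le> c" "c \<le> real k"
  shows "c ^ x * fact k \<le> fact (k + x)"
proof (induction x)
  case 0
  then show ?case by simp
next
  case (Suc x)
  have "c ^ Suc x * fact k = c * (c ^ x * fact k)"
    by simp
  also have "\<dots> \<le> real (Suc (k + x)) * fact (k + x)"
    using Suc assms by (intro mult_mono) auto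
  finally show ?case
    by simp
qed

lemma power_mult_fact_diff_le_fact:
  fixes c :: real
  assumes "0 \<le> c" "exp 1 * c \<le> real m" "x \<le> m"
  shows "c ^ x * fact (m - x) \<le> fact m"
proof (cases "c \<le> real (m - x)")
  case True
  then show ?thesis
    using power_mult_fact_le_fact_add[OF assms(1) True, of x] assms(3) by simp
next
  case False
  have "fact (m - x) \<le> real (m - x) ^ (m - x)"
    using fact_le_power[of "m - x"] by simp
  also have "\<dots> \<le> c ^ (m - x)"
    using False by (intro power_mono) auto
  finally have "c ^ x * fact (m - x) \<le> c ^ x * c ^ (m - x)"
    using assms(1) by (intro mult_left_mono) auto
  also have "\<dots> = c ^ m"
    using assms(3) by (simp flip: power_add)
  also have "\<dots> \<le> (real m / exp 1) ^ m"
    using assms(1,2) by (intro power_mono) (auto simp: field_simps)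
  also have "\<dots> \<le> fact m"
    by (rule power_div_exp_le_fact)
  finally show ?thesis .
qed

lemma fact_diff_diff_le_inverse_quarter_power:
  assumes "4 * a \<le> n" "a + x \<le> n"
  shows "fact (n - a - x) \<le> inverse (real n / 4) ^ x * (fact (n - a) :: real)"
proof (cases "x = 0")
  case True
  then show ?thesis by simp
next
  case False
  have "exp 1 * (real n / 4) \<le> 3 * (real n / 4)"
    using exp_le by (intro mult_right_mono) auto
  also have "\<dots> \<le> real (n - a)"
    using assms by (simp add: of_nat_diff)
  finally have "(real n / 4) ^ x * fact (n - a - x) \<le> fact (n - a)"
    using assms(2) by (intro power_mult_fact_diff_le_fact) auto
  moreover have "0 < real n / 4"
    using False assms(2) by simp
  ultimately show ?thesis
    by (simp add: power_inverse field_simps)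
qed

definition matching :: "('a \<times> 'b) set \<Rightarrow> bool" where
  "matching B \<longleftrightarrow> (\<forall>p\<in>B. \<forall>q\<in>B. fst p = fst q \<longleftrightarrow> snd p = snd q)"

lemma matching_subset: "matching B \<Longrightarrow> A \<subseteq> B \<Longrightarrow> matching A"
  unfolding matching_def by blast

lemma matching_card_fst: "matching B \<Longrightarrow> card (fst ` B) = card B"
  unfolding matching_def by (intro card_image inj_onI) (auto simp: prod_eq_iff)

lemma matching_card_le:
  assumes "matching B" "B \<subseteq> S \<times> T" "finite S"
  shows "card B \<le> card S"
proof -
  have "fst ` B \<subseteq> S"
    using assms(2) by auto
  from card_mono[OF assms(3) this] show ?thesis
    using matching_card_fst[OF assms(1)] by simp
qed

lemma matching_extends_to_permutation:
  assumes "finite B" "matching B" "B \<subseteq> S \<times> S"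
  shows "\<exists>\<sigma>. \<sigma> permutes S \<and> (\<forall>(i, j)\<in>B. \<sigma> i = j)"
  using assms
proof (induction B rule: finite_induct)
  case empty
  then show ?case
    using permutes_id by blast
next
  case (insert p B)
  obtain i j where p: "p = (i, j)"
    by fastforce
  obtain \<sigma> where \<sigma>: "\<sigma> permutes S" "\<forall>(k, l)\<in>B. \<sigma> k = l"
    using insert matching_subset[of "insert p B" B] by auto
  define \<tau> where "\<tau> = transpose (\<sigma> i) j \<circ> \<sigma>"
  have "\<tau> permutes S"
    using insert.prems(2) p \<sigma>(1) unfolding \<tau>_def
    by (intro permutes_compose permutes_swap_id) (auto simp: permutes_in_image)
  moreover have "\<tau> k = l" if "(k, l) \<in> B" for k l
  proof -
    have "k \<noteq> i" "l \<noteq> j"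
      using insert.hyps(2) insert.prems(1) that p unfolding matching_def by fastforce+
    moreover have "\<sigma> k \<noteq> \<sigma> i"
      using \<open>k \<noteq> i\<close> permutes_inj[OF \<sigma>(1)] by (auto dest: injD)
    ultimately show ?thesis
      using \<sigma>(2) that by (auto simp: \<tau>_def transpose_def)
  qed
  ultimately show ?case
    using p by (auto simp: \<tau>_def)
qed

lemma permutes_Diff_fixpoints:
  assumes "q permutes S" "\<And>x. x \<in> D \<Longrightarrow> q x = x"
  shows "q permutes S - D"
  using assms unfolding permutes_def by auto

lemma permutations_agreeing_eq_compose_permutes:
  assumes \<sigma>: "\<sigma> permutes S" "\<forall>(i, j)\<in>B. \<sigma> i = j"
  shows "{p. p permutes S \<and> (\<forall>(i, j)\<in>B. p i = j)} = (\<lambda>q. \<sigma> \<circ> q) ` {q. q permutes S - fst ` B}"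
proof (intro equalityI subsetI)
  fix p
  assume "p \<in> {p. p permutes S \<and> (\<forall>(i, j)\<in>B. p i = j)}"
  then have p: "p permutes S" "\<forall>(i, j)\<in>B. p i = j"
    by auto
  have "inv \<sigma> \<circ> p permutes S - fst ` B"
  proof (rule permutes_Diff_fixpoints)
    show "inv \<sigma> \<circ> p permutes S"
      using p(1) \<sigma>(1) by (intro permutes_compose permutes_inv)
    show "(inv \<sigma> \<circ> p) x = x" if "x \<in> fst ` B" for x
      using that p(2) \<sigma> by (force simp: permutes_inverses(2)[OF \<sigma>(1)])
  qed
  moreover have "p = \<sigma> \<circ> (inv \<sigma> \<circ> p)"
    by (simp add: fun_eq_iff permutes_inverses(1)[OF \<sigma>(1)])
  ultimately show "p \<in> (\<lambda>q. \<sigma> \<circ> q) ` {q. q permutes S - fst ` B}"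
    by blast
next
  fix p
  assume "p \<in> (\<lambda>q. \<sigma> \<circ> q) ` {q. q permutes S - fst ` B}"
  then obtain q where q: "q permutes S - fst ` B" and p: "p = \<sigma> \<circ> q"
    by auto
  have "q permutes S"
    using q by (rule permutes_subset) auto
  moreover have "q i = i" if "(i, j) \<in> B" for i j
  proof -
    have "i \<notin> S - fst ` B"
      using that by force
    then show ?thesis
      by (rule permutes_not_in[OF q])
  qed
  ultimately show "p \<in> {p. p permutes S \<and> (\<forall>(i, j)\<in>B. p i = j)}"
    using \<sigma> p by (auto intro: permutes_compose)
qed

lemma inj_comp_left_permutes:
  assumes "\<sigma> permutes S"
  shows "inj (\<lambda>q. \<sigma> \<circ> q)"
proof (rule injI)
  fix q q'
  assume "\<sigma> \<circ> q = \<sigma> \<circ> q'"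
  then have "inv \<sigma> \<circ> \<sigma> \<circ> q = inv \<sigma> \<circ> \<sigma> \<circ> q'"
    by (simp add: comp_assoc)
  then show "q = q'"
    by (simp add: permutes_inv_o(2)[OF assms])
qed

lemma card_permutations_extending_matching:
  assumes "finite S" "matching B" "B \<subseteq> S \<times> S"
  shows "card {p. p permutes S \<and> (\<forall>(i, j)\<in>B. p i = j)} = fact (card S - card B)"
proof -
  have "finite B"
    using assms(1,3) finite_subset by blast
  then obtain \<sigma> where \<sigma>: "\<sigma> permutes S" "\<forall>(i, j)\<in>B. \<sigma> i = j"
    using matching_extends_to_permutation assms(2,3) by blast
  have "fst ` B \<subseteq> S"
    using assms(3) by auto
  then have "card (S - fst ` B) = card S - card B"
    using card_Diff_subset[OF finite_subset[OF _ assms(1)]] matching_card_fst[OF assms(2)] by simp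
  moreover have "inj_on (\<lambda>q. \<sigma> \<circ> q) {q. q permutes S - fst ` B}"
    using inj_comp_left_permutes[OF \<sigma>(1)] by (rule inj_on_subset) simp
  ultimately show ?thesis
    using assms(1) permutations_agreeing_eq_compose_permutes[OF \<sigma>]
    by (simp add: card_image card_permutations)
qed

definition graph_on :: "'a set \<Rightarrow> ('a \<Rightarrow> 'b) \<Rightarrow> ('a \<times> 'b) set" where
  "graph_on S f = (\<lambda>i. (i, f i)) ` S"

lemma subset_graph_on_iff: "B \<subseteq> graph_on S f \<longleftrightarrow> (\<forall>(i, j)\<in>B. i \<in> S \<and> f i = j)"
  unfolding graph_on_def by auto

lemma matching_graph_on: "inj_on f S \<Longrightarrow> matching (graph_on S f)"
  unfolding matching_def graph_on_def by (auto dest: inj_onD)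

lemma inj_on_graph_on_permutes: "inj_on (graph_on S) {p. p permutes S}"
proof (rule inj_onI)
  fix p q
  assume p: "p \<in> {p. p permutes S}" and q: "q \<in> {p. p permutes S}"
    and eq: "graph_on S p = graph_on S q"
  show "p = q"
  proof
    fix x
    show "p x = q x"
    proof (cases "x \<in> S")
      case True
      then have "(x, p x) \<in> graph_on S q"
        using eq unfolding graph_on_def by blast
      then show ?thesis
        unfolding graph_on_def by auto
    next
      case False
      then show ?thesis
        using p q by (simp add: permutes_not_in)
    qed
  qed
qed

lemma perm_graphs_eq_graph_on_bij_betw:
  "perm_graphs n = {graph_on {1..n} s | s. bij_betw s {1..n} {1..n}}"
proof -
  have "{(i, s i) | i. i \<in> {1..n}} = graph_on {1..n} s" for s :: "nat \<Rightarrow> nat"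
    unfolding graph_on_def by blast
  then show ?thesis
    unfolding perm_graphs_def by (simp only:)
qed

lemma perm_graphs_eq_graph_on_permutes:
  "perm_graphs n = graph_on {1..n} ` {p. p permutes {1..n}}"
proof (intro equalityI subsetI)
  fix G
  assume "G \<in> perm_graphs n"
  then obtain s where s: "bij_betw s {1..n} {1..n}" and G: "G = graph_on {1..n} s"
    unfolding perm_graphs_eq_graph_on_bij_betw by blast
  define p where "p = (\<lambda>i. if i \<in> {1..n} then s i else i)"
  have "bij_betw p {1..n} {1..n}"
    using s unfolding p_def by (subst bij_betw_cong[where g = s]) auto
  then have "p permutes {1..n}"
    by (rule bij_imp_permutes) (auto simp: p_def)
  moreover have "G = graph_on {1..n} p"
    unfolding G graph_on_def p_def by auto
  ultimately show "G \<in> graph_on {1..n} ` {p. p permutes {1..n}}"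
    by blast
next
  fix G
  assume "G \<in> graph_on {1..n} ` {p. p permutes {1..n}}"
  then show "G \<in> perm_graphs n"
    unfolding perm_graphs_eq_graph_on_bij_betw using permutes_imp_bij by blast
qed

lemma matching_perm_graphs:
  assumes "G \<in> perm_graphs n"
  shows "matching G"
proof -
  obtain p where "p permutes {1..n}" "G = graph_on {1..n} p"
    using assms unfolding perm_graphs_eq_graph_on_permutes by blast
  then show ?thesis
    by (simp add: matching_graph_on permutes_inj_on)
qed

lemma link_eq_image: "link F X = (\<lambda>G. G - X) ` {G \<in> F. X \<subseteq> G}"
  unfolding link_def by auto

lemma card_link: "card (link F X) = card {G \<in> F. X \<subseteq> G}"
proof -
  have "inj_on (\<lambda>G. G - X) {G \<in> F. X \<subseteq> G}"
    by (rule inj_onI) (metis (no_types, lifting) Diff_partition mem_Collect_eq)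
  then show ?thesis
    unfolding link_eq_image by (rule card_image)
qed

lemma link_link:
  assumes "A \<inter> X = {}"
  shows "link (link F A) X = link F (A \<union> X)"
proof -
  have "link (link F A) X = (\<lambda>G. G - A - X) ` {G \<in> F. A \<subseteq> G \<and> X \<subseteq> G - A}"
    unfolding link_eq_image by (auto simp: image_image)
  also have "\<dots> = link F (A \<union> X)"
    using assms unfolding link_eq_image by (auto simp: Diff_Un intro!: image_cong)
  finally show ?thesis .
qed

lemma link_link_eq_empty: "A \<inter> X \<noteq> {} \<Longrightarrow> link (link F A) X = {}"
  unfolding link_def by auto

lemma link_perm_graphs_eq_empty: "\<not> matching B \<Longrightarrow> link (perm_graphs n) B = {}"
  unfolding link_def using matching_perm_graphs matching_subset by blast

lemma card_link_perm_graphs: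
  assumes "B \<subseteq> grid n" "matching B"
  shows "card (link (perm_graphs n) B) = fact (n - card B)"
proof -
  have "{G \<in> perm_graphs n. B \<subseteq> G}
      = graph_on {1..n} ` {p. p permutes {1..n} \<and> B \<subseteq> graph_on {1..n} p}"
    unfolding perm_graphs_eq_graph_on_permutes by blast
  also have "\<dots> = graph_on {1..n} ` {p. p permutes {1..n} \<and> (\<forall>(i, j)\<in>B. p i = j)}"
    using assms(1) unfolding subset_graph_on_iff grid_def by fast
  finally have "{G \<in> perm_graphs n. B \<subseteq> G}
      = graph_on {1..n} ` {p. p permutes {1..n} \<and> (\<forall>(i, j)\<in>B. p i = j)}" .
  moreover have "inj_on (graph_on {1..n}) {p. p permutes {1..n} \<and> (\<forall>(i, j)\<in>B. p i = j)}"
    by (rule inj_on_subset[OF inj_on_graph_on_permutes]) auto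
  ultimately show ?thesis
    using card_permutations_extending_matching[of "{1..n}" B] assms
    by (simp add: card_link card_image grid_def)
qed

theorem lemma12:
  fixes n :: nat
  shows "spread2 (grid n) (real n / 4) (real n / 4) (perm_graphs n)"
  unfolding spread2_def spread_def
proof (intro allI impI, elim conjE)
  fix A X
  assume A: "A \<subseteq> grid n" "real (card A) \<le> real n / 4" and X: "X \<subseteq> grid n"
  let ?\<Sigma> = "perm_graphs n"
  show "real (card (link (link ?\<Sigma> A) X)) \<le> inverse (real n / 4) ^ card X * real (card (link ?\<Sigma> A))"
  proof (cases "A \<inter> X = {} \<and> matching (A \<union> X)")
    case False
    then have "link (link ?\<Sigma> A) X = {}"
      by (metis link_link link_link_eq_empty link_perm_graphs_eq_empty)
    then show ?thesis
      by simp
  next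
    case True
    have "finite A" "finite X"
      using A(1) X finite_subset unfolding grid_def by blast+
    then have card_AX: "card (A \<union> X) = card A + card X"
      using True by (simp add: card_Un_disjoint)
    moreover have "card (A \<union> X) \<le> n"
      using matching_card_le[of "A \<union> X" "{1..n}" "{1..n}"] A(1) X True by (simp add: grid_def)
    moreover have "card (link (link ?\<Sigma> A) X) = fact (n - card (A \<union> X))"
      using card_link_perm_graphs[of "A \<union> X"] A(1) X True by (simp add: link_link)
    moreover have "card (link ?\<Sigma> A) = fact (n - card A)"
      using card_link_perm_graphs[OF A(1) matching_subset[of "A \<union> X" A]] True by simp
    ultimately show ?thesis
      using fact_diff_diff_le_inverse_quarter_power[of "card A" n "card X"] A(2)
      by (simp add: diff_diff_left)
  qed
qed

end
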